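(* Let $G$ be a finite simple connected graph, and let $h(G)$ denote the number of holes in $G$. Suppose that all the holes in $G$ are pairwise edge-disjoint and that $G$ has at most one non-edge maximal clique. If the clique number $\omega(G)$ satisfies $2\le \omega(G)\le h(G)+1$, then $$k(G)\le h(G)-\omega(G)+3.$$
   Context: A hole of a graph is an induced (chordless) cycle of length at least $4$. A clique is a complete subgraph; a clique is non-edge if it has at least $3$ vertices. $\omega(G)$ is the maximum number of vertices of a clique in $G$. For a digraph $D=(V,A)$, its competition graph $C(D)$ has vertex set $V$, with distinct $x,y$ adjacent iff there is $v\in V$ with $(x,v),(y,v)\in A$. The competition number $k(G)$ is the smallest $k\ge 0$ such that $G$ together with $k$ new isolated vertices is the competition graph of an acyclic digraph. *)

theory Defs
  imports Main
begin

definition simple_graph :: "'a set \<Rightarrow> ('a \<Rightarrow> 'a \<Rightarrow> bool) \<Rightarrow> bool" where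
  "simple_graph V E \<longleftrightarrow> finite V \<and>
     (\<forall>x y. E x y \<longrightarrow> x \<in> V \<and> y \<in> V \<and> x \<noteq> y \<and> E y x)"

definition connected_graph :: "'a set \<Rightarrow> ('a \<Rightarrow> 'a \<Rightarrow> bool) \<Rightarrow> bool" where
  "connected_graph V E \<longleftrightarrow> V \<noteq> {} \<and> (\<forall>x\<in>V. \<forall>y\<in>V. E\<^sup>*\<^sup>* x y)"

text \<open>A hole: the vertex set of an induced (chordless) cycle of length at least 4.
  The cycle is listed as xs; the adjacencies among its vertices are exactly the
  cyclically consecutive pairs.\<close>
definition hole :: "'a set \<Rightarrow> ('a \<Rightarrow> 'a \<Rightarrow> bool) \<Rightarrow> 'a set \<Rightarrow> bool" where
  "hole V E S \<longleftrightarrow> S \<subseteq> V \<and> (\<exists>xs. distinct xs \<and> set xs = S \<and> length xs \<ge> 4 \<and>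
     (\<forall>i<length xs. \<forall>j<length xs.
        E (xs ! i) (xs ! j) \<longleftrightarrow> (j = Suc i mod length xs \<or> i = Suc j mod length xs)))"

definition num_holes :: "'a set \<Rightarrow> ('a \<Rightarrow> 'a \<Rightarrow> bool) \<Rightarrow> nat" where
  "num_holes V E = card {S. hole V E S}"

definition hole_edges :: "('a \<Rightarrow> 'a \<Rightarrow> bool) \<Rightarrow> 'a set \<Rightarrow> 'a set set" where
  "hole_edges E S = {{x, y} | x y. x \<in> S \<and> y \<in> S \<and> E x y}"

definition holes_edge_disjoint :: "'a set \<Rightarrow> ('a \<Rightarrow> 'a \<Rightarrow> bool) \<Rightarrow> bool" where
  "holes_edge_disjoint V E \<longleftrightarrow>
     (\<forall>S T. hole V E S \<and> hole V E T \<and> S \<noteq> T \<longrightarrow> hole_edges E S \<inter> hole_edges E T = {})"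

definition clique :: "'a set \<Rightarrow> ('a \<Rightarrow> 'a \<Rightarrow> bool) \<Rightarrow> 'a set \<Rightarrow> bool" where
  "clique V E K \<longleftrightarrow> K \<subseteq> V \<and> (\<forall>x\<in>K. \<forall>y\<in>K. x \<noteq> y \<longrightarrow> E x y)"

definition maximal_clique :: "'a set \<Rightarrow> ('a \<Rightarrow> 'a \<Rightarrow> bool) \<Rightarrow> 'a set \<Rightarrow> bool" where
  "maximal_clique V E K \<longleftrightarrow> clique V E K \<and> (\<forall>K'. clique V E K' \<and> K \<subseteq> K' \<longrightarrow> K' = K)"

definition clique_number :: "'a set \<Rightarrow> ('a \<Rightarrow> 'a \<Rightarrow> bool) \<Rightarrow> nat" where
  "clique_number V E = Max (card ` {K. clique V E K})"

definition add_isolated_V :: "'a set \<Rightarrow> nat \<Rightarrow> ('a + nat) set" where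
  "add_isolated_V V k = Inl ` V \<union> Inr ` {..<k}"

fun add_isolated_E :: "('a \<Rightarrow> 'a \<Rightarrow> bool) \<Rightarrow> ('a + nat) \<Rightarrow> ('a + nat) \<Rightarrow> bool" where
  "add_isolated_E E (Inl x) (Inl y) = E x y"
| "add_isolated_E E _ _ = False"

definition is_competition_graph_of_acyclic ::
  "'b set \<Rightarrow> ('b \<Rightarrow> 'b \<Rightarrow> bool) \<Rightarrow> bool" where
  "is_competition_graph_of_acyclic W F \<longleftrightarrow>
     (\<exists>A. A \<subseteq> W \<times> W \<and> acyclic A \<and>
        (\<forall>x\<in>W. \<forall>y\<in>W. x \<noteq> y \<longrightarrow> (F x y \<longleftrightarrow> (\<exists>v\<in>W. (x, v) \<in> A \<and> (y, v) \<in> A))))"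

definition competition_number :: "'a set \<Rightarrow> ('a \<Rightarrow> 'a \<Rightarrow> bool) \<Rightarrow> nat" where
  "competition_number V E =
     (LEAST k. is_competition_graph_of_acyclic (add_isolated_V V k) (add_isolated_E E))"

end

(*
  Fix a maximum clique K.  Since at most one maximal clique has >= 3 vertices,
  every triangle of G lies inside K.  Let F be the set of "outer" edges, i.e. edges not inside K.
  (1) Counting: |F| + |K| <= |V| + h.  By induction on |V|: delete a vertex v outside K whose
      removal keeps G connected.  No triangle contains v, so N(v) is independent; any two
      neighbours of v are joined through v by a hole (take a shortest path between them in G - v),
      and since holes are edge-disjoint, deg v <= 1 + (number of holes through v).
  (2) Scheduling: any family F of 2-subsets of a finite set V with |F| <= |V| + b - 2, b >= 1,
      admits a ranking of V and an injective partial assignment of edges to "sink" vertices of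
      strictly higher rank leaving at most b edges unassigned (peel off a vertex of minimum degree).
  (3) Realization: such an assignment yields an acyclic digraph whose competition graph is G plus
      b + 1 isolated vertices: each assigned edge points to its sink, each unassigned edge to its
      own new vertex, and all of K to one further new vertex.
  With b = h - omega + 2 this gives k(G) <= h - omega + 3.
*)
theory Submission
  imports Defs
begin

lemma simple_graph_sym: "simple_graph V E \<Longrightarrow> E x y \<Longrightarrow> E y x"
  by (simp add: simple_graph_def)

lemma simple_graph_irrefl: "simple_graph V E \<Longrightarrow> \<not> E x x"
  by (auto simp: simple_graph_def)

lemma simple_graph_edge_in: "simple_graph V E \<Longrightarrow> E x y \<Longrightarrow> x \<in> V \<and> y \<in> V"
  by (simp add: simple_graph_def)

definition induced :: "('a \<Rightarrow> 'a \<Rightarrow> bool) \<Rightarrow> 'a set \<Rightarrow> 'a \<Rightarrow> 'a \<Rightarrow> bool" where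
  "induced E R = (\<lambda>x y. E x y \<and> x \<in> R \<and> y \<in> R)"

lemma simple_graph_induced:
  "simple_graph V E \<Longrightarrow> R \<subseteq> V \<Longrightarrow> simple_graph R (induced E R)"
  by (auto simp: simple_graph_def induced_def intro: finite_subset)

definition outer_edges :: "('a \<Rightarrow> 'a \<Rightarrow> bool) \<Rightarrow> 'a set \<Rightarrow> 'a set set" where
  "outer_edges E K = {{x, y} | x y. E x y \<and> \<not> (x \<in> K \<and> y \<in> K)}"

lemma outer_edges_subset_Pow: "simple_graph V E \<Longrightarrow> outer_edges E K \<subseteq> Pow V"
  by (auto simp: outer_edges_def simple_graph_def)

lemma finite_outer_edges: "simple_graph V E \<Longrightarrow> finite (outer_edges E K)"
  by (meson finite_Pow_iff finite_subset outer_edges_subset_Pow simple_graph_def)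

section \<open>Realizing G plus isolated vertices as a competition graph\<close>

text \<open>If every outer edge e gets its own prey \<tau> e, all of K shares one further prey z, and a
  rank function increases along all these arcs, then the arcs form an acyclic digraph whose
  competition graph is G together with the isolated vertices.\<close>
lemma competition_graph_from_prey_map:
  fixes \<tau> :: "'a set \<Rightarrow> 'a + nat" and \<rho> :: "'a + nat \<Rightarrow> nat"
  assumes sg: "simple_graph V E" and cl: "clique V E K"
    and \<tau>_inj: "inj_on \<tau> (outer_edges E K)"
    and \<tau>_W: "\<tau> ` outer_edges E K \<subseteq> add_isolated_V V k"
    and z: "z \<in> add_isolated_V V k" "z \<notin> \<tau> ` outer_edges E K"
    and rank_outer: "\<forall>e\<in>outer_edges E K. \<forall>x\<in>e. \<rho> (Inl x) < \<rho> (\<tau> e)"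
    and rank_K: "\<forall>x\<in>K. \<rho> (Inl x) < \<rho> z"
  shows "is_competition_graph_of_acyclic (add_isolated_V V k) (add_isolated_E E)"
proof -
  define F W where "F = outer_edges E K" and "W = add_isolated_V V k"
  define A :: "('a + nat) rel" where "A = {(Inl x, \<tau> e) | x e. e \<in> F \<and> x \<in> e} \<union> {(Inl x, z) | x. x \<in> K}"
  have KV: "K \<subseteq> V" using cl by (simp add: clique_def)
  have FV: "e \<subseteq> V" if "e \<in> F" for e using outer_edges_subset_Pow[OF sg] that by (auto simp: F_def)
  have "A \<subseteq> W \<times> W"
    using FV KV \<tau>_W z by (auto simp: A_def W_def F_def add_isolated_V_def)
  moreover have "acyclic A"
  proof -
    have "A \<subseteq> inv_image less_than \<rho>" using rank_outer rank_K by (auto simp: A_def F_def)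
    then show ?thesis by (meson wf_acyclic wf_inv_image wf_less_than wf_subset)
  qed
  moreover
  have common_prey: "(\<exists>w\<in>W. (Inl a, w) \<in> A \<and> (Inl b, w) \<in> A) \<longleftrightarrow> E a b" if "a \<noteq> b" for a b
  proof
    assume "\<exists>w\<in>W. (Inl a, w) \<in> A \<and> (Inl b, w) \<in> A"
    then obtain w where w: "(Inl a, w) \<in> A" "(Inl b, w) \<in> A" by blast
    show "E a b"
    proof (cases "w = z")
      case True
      then have "a \<in> K" "b \<in> K" using w z(2) by (auto simp: A_def F_def)
      then show ?thesis using cl \<open>a \<noteq> b\<close> by (simp add: clique_def)
    next
      case False
      then obtain e e' where "e \<in> F" "e' \<in> F" "a \<in> e" "b \<in> e'" "\<tau> e = \<tau> e'"
        using w by (auto simp: A_def)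
      then have "e = e'" using \<tau>_inj by (auto simp: F_def inj_on_def)
      with \<open>e \<in> F\<close> obtain p q where "e = {p, q}" "E p q" by (auto simp: F_def outer_edges_def)
      then show ?thesis
        using \<open>a \<in> e\<close> \<open>b \<in> e'\<close> \<open>e = e'\<close> \<open>a \<noteq> b\<close> simple_graph_sym[OF sg] by auto
    qed
  next
    assume ab: "E a b"
    show "\<exists>w\<in>W. (Inl a, w) \<in> A \<and> (Inl b, w) \<in> A"
    proof (cases "a \<in> K \<and> b \<in> K")
      case True
      then show ?thesis using z(1) by (auto simp: A_def W_def)
    next
      case False
      then have "{a, b} \<in> F" using ab by (auto simp: F_def outer_edges_def)
      then show ?thesis using \<tau>_W by (auto simp: A_def W_def F_def)
    qed
  qed
  have "\<forall>x\<in>W. \<forall>y\<in>W. x \<noteq> y \<longrightarrow> (add_isolated_E E x y \<longleftrightarrow> (\<exists>v\<in>W. (x, v) \<in> A \<and> (y, v) \<in> A))"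
  proof (intro ballI impI)
    fix x y :: "'a + nat" assume "x \<in> W" "y \<in> W" "x \<noteq> y"
    then show "add_isolated_E E x y \<longleftrightarrow> (\<exists>v\<in>W. (x, v) \<in> A \<and> (y, v) \<in> A)"
      using common_prey by (cases x; cases y) (auto simp: A_def)
  qed
  ultimately show ?thesis unfolding is_competition_graph_of_acyclic_def W_def by blast
qed

section \<open>Sink assignments\<close>

definition sink_assignment ::
  "'a set \<Rightarrow> 'a set set \<Rightarrow> ('a \<Rightarrow> nat) \<Rightarrow> ('a set \<Rightarrow> 'a option) \<Rightarrow> bool" where
  "sink_assignment V F r \<sigma> \<longleftrightarrow> inj_on \<sigma> {e\<in>F. \<sigma> e \<noteq> None} \<and>
     (\<forall>e\<in>F. \<forall>u. \<sigma> e = Some u \<longrightarrow> u \<in> V \<and> (\<forall>x\<in>e. r x < r u))"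

text \<open>A sink assignment of the outer edges leaving N edges unassigned shows k(G) <= N + 1:
  every unassigned edge gets its own new isolated prey, and K one more.\<close>
lemma competition_number_le_unassigned:
  assumes sg: "simple_graph V E" and cl: "clique V E K"
    and sa: "sink_assignment V (outer_edges E K) r \<sigma>"
  shows "competition_number V E \<le> Suc (card {e\<in>outer_edges E K. \<sigma> e = None})"
proof -
  define F where "F = outer_edges E K"
  define U where "U = {e\<in>F. \<sigma> e = None}"
  define N where "N = card U"
  have "finite U" using finite_outer_edges[OF sg] by (simp add: U_def F_def)
  then obtain g where g: "bij_betw g U {0..<N}" using ex_bij_betw_finite_nat N_def by blast
  define \<tau> where "\<tau> e = (case \<sigma> e of Some u \<Rightarrow> Inl u | None \<Rightarrow> Inr (g e))" for e
  define R where "R = Suc (Max (insert 0 (r ` V)))"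
  define \<rho> :: "'a + nat \<Rightarrow> nat" where "\<rho> = case_sum r (\<lambda>_. R)"
  have finV: "finite V" using sg by (simp add: simple_graph_def)
  have r_less_R: "r x < R" if "x \<in> V" for x
    using finV that by (simp add: R_def le_imp_less_Suc)
  have sink: "u \<in> V \<and> (\<forall>x\<in>e. r x < r u)" if "e \<in> F" "\<sigma> e = Some u" for e u
    using sa that by (auto simp: sink_assignment_def F_def)
  have g_less: "g e < N" if "e \<in> F" "\<sigma> e = None" for e
    using g that by (auto simp: bij_betw_def U_def)
  have "inj_on \<tau> F"
  proof (rule inj_onI)
    fix e e' assume e: "e \<in> F" "e' \<in> F" "\<tau> e = \<tau> e'"
    show "e = e'"
    proof (cases "\<sigma> e")
      case None
      then have "\<sigma> e' = None" "e \<in> U" using e by (auto simp: \<tau>_def U_def split: option.splits)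
      then show ?thesis using e None g by (auto simp: \<tau>_def U_def bij_betw_def inj_on_def)
    next
      case (Some u)
      then have "\<sigma> e' = Some u" using e by (auto simp: \<tau>_def split: option.splits)
      then show ?thesis using sa e Some by (auto simp: sink_assignment_def inj_on_def F_def)
    qed
  qed
  moreover have "\<tau> ` F \<subseteq> add_isolated_V V (Suc N)"
  proof
    fix w assume "w \<in> \<tau> ` F"
    then obtain e where "e \<in> F" "w = \<tau> e" by blast
    then show "w \<in> add_isolated_V V (Suc N)"
      using sink[of e] g_less[of e] by (cases "\<sigma> e") (auto simp: \<tau>_def add_isolated_V_def)
  qed
  moreover have "Inr N \<notin> \<tau> ` F"
    using g_less by (force simp: \<tau>_def split: option.splits)
  moreover have "\<forall>e\<in>F. \<forall>x\<in>e. \<rho> (Inl x) < \<rho> (\<tau> e)"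
    using sink r_less_R outer_edges_subset_Pow[OF sg]
    by (fastforce simp: \<tau>_def \<rho>_def F_def split: option.splits)
  moreover have "\<forall>x\<in>K. \<rho> (Inl x) < \<rho> (Inr N)"
    using cl r_less_R by (auto simp: \<rho>_def clique_def)
  ultimately have "is_competition_graph_of_acyclic (add_isolated_V V (Suc N)) (add_isolated_E E)"
    using competition_graph_from_prey_map[OF sg cl, of \<tau> "Suc N" "Inr N" \<rho>]
    by (auto simp: F_def add_isolated_V_def)
  then show ?thesis unfolding competition_number_def N_def U_def F_def by (rule Least_le)
qed

lemma degree_sum:
  assumes "finite V" "\<forall>e\<in>F. e \<subseteq> V \<and> card e = 2"
  shows "(\<Sum>v\<in>V. card {e\<in>F. v \<in> e}) = 2 * card F"
proof -
  have "F \<subseteq> Pow V" using assms(2) by blast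
  then have "finite F" using assms(1) finite_subset by blast
  then have "(\<Sum>v\<in>V. card {e\<in>F. v \<in> e}) = (\<Sum>v\<in>V. \<Sum>e\<in>F. if v \<in> e then 1 else 0)"
    by (simp add: sum.inter_filter[symmetric])
  also have "\<dots> = (\<Sum>e\<in>F. \<Sum>v\<in>V. if v \<in> e then 1 else 0)"
    by (rule sum.swap)
  also have "\<dots> = (\<Sum>e\<in>F. card {v\<in>V. v \<in> e})"
    using assms(1) by (simp add: sum.inter_filter[symmetric])
  also have "\<dots> = (\<Sum>e\<in>F. 2)"
  proof (rule sum.cong)
    fix e assume "e \<in> F"
    then have "{v\<in>V. v \<in> e} = e" using assms(2) by auto
    then show "card {v\<in>V. v \<in> e} = 2" using assms(2) \<open>e \<in> F\<close> by simp
  qed simp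
  finally show ?thesis by simp
qed

lemma low_degree_vertex:
  fixes b :: int
  assumes finV: "finite V" and V0: "V \<noteq> {}" and F2: "\<forall>e\<in>F. e \<subseteq> V \<and> card e = 2"
    and b1: "b \<ge> 1" and cardF: "int (card F) \<le> int (card V) + b - 2"
  shows "\<exists>v\<in>V. int (card {e\<in>F. v \<in> e}) \<le> b"
proof (rule ccontr)
  assume "\<not> ?thesis"
  then have big: "\<forall>v\<in>V. b + 1 \<le> int (card {e\<in>F. v \<in> e})" by auto
  show False
  proof (cases "card V = 1")
    case True
    then obtain w where "V = {w}" using card_1_singletonE by blast
    have "card e \<le> 1" if "e \<subseteq> V" for e using card_mono[OF finV that] \<open>V = {w}\<close> by simp
    then have "F = {}" using F2 by (metis all_not_in_conv numeral_le_one_iff semiring_norm(69))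
    then show False using big \<open>V = {w}\<close> b1 by simp
  next
    case False
    moreover have "card V \<noteq> 0" using V0 finV by simp
    ultimately have n2: "card V \<ge> 2" by linarith
    have "int (card V) * (b + 1) = (\<Sum>v\<in>V. b + 1)" by simp
    also have "\<dots> \<le> (\<Sum>v\<in>V. int (card {e\<in>F. v \<in> e}))" using big by (intro sum_mono) auto
    also have "\<dots> = 2 * int (card F)"
      using degree_sum[OF finV F2] by (simp flip: of_nat_sum)
    finally have "int (card V) * (b + 1) \<le> 2 * int (card F)" .
    moreover have "(int (card V) - 2) * (b - 1) \<ge> 0" using n2 b1 by simp
    moreover have "(int (card V) - 2) * (b - 1) = int (card V) * (b + 1) - 2 * int (card V) - 2 * b + 2"
      by (simp add: algebra_simps)
    ultimately show False using cardF by linarith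
  qed
qed

text \<open>Adding a vertex v of top rank to a sink assignment of F' on V': one previously unassigned
  edge of F' (if any) can now use v as its sink, while the edges Fv at v stay unassigned.\<close>
lemma sink_assignment_extend:
  assumes sa': "sink_assignment V' F' r' \<sigma>'" and finV': "finite V'" and fin': "finite F'"
    and F'V': "\<forall>e\<in>F'. e \<subseteq> V'" and Fv: "finite Fv" "\<forall>e\<in>Fv. v \<in> e" and v: "v \<notin> V'"
  shows "\<exists>r \<sigma>. sink_assignment (insert v V') (F' \<union> Fv) r \<sigma> \<and>
           card {e\<in>F' \<union> Fv. \<sigma> e = None} \<le> card Fv + (card {e\<in>F'. \<sigma>' e = None} - 1)"
proof -
  define U' where "U' = {e\<in>F'. \<sigma>' e = None}"
  define e0 where "e0 = (SOME e. e \<in> U')"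
  define R where "R = Suc (Max (insert 0 (r' ` V')))"
  define r where "r = r'(v := R)"
  define \<sigma> where "\<sigma> e = (if v \<in> e then None else if U' \<noteq> {} \<and> e = e0 then Some v else \<sigma>' e)" for e
  have e0: "U' \<noteq> {} \<Longrightarrow> e0 \<in> U'" unfolding e0_def by (rule someI_ex) blast
  have r_less_R: "r' x < R" if "x \<in> V'" for x
    using finV' that by (simp add: R_def le_imp_less_Suc)
  have sink': "u \<in> V' \<and> (\<forall>x\<in>e. r' x < r' u)" if "e \<in> F'" "\<sigma>' e = Some u" for e u
    using sa' that by (auto simp: sink_assignment_def)
  have v_notin: "v \<notin> e" if "e \<in> F'" for e using F'V' v that by blast
  have assigned_in_F': "e \<in> F'" "v \<notin> e" if "e \<in> F' \<union> Fv" "\<sigma> e \<noteq> None" for e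
    using that Fv(2) by (auto simp: \<sigma>_def)
  have \<sigma>_F': "\<sigma> e = (if U' \<noteq> {} \<and> e = e0 then Some v else \<sigma>' e)" if "e \<in> F'" for e
    using v_notin[OF that] by (simp add: \<sigma>_def)
  have \<sigma>'_not_v: "\<sigma>' e \<noteq> Some v" if "e \<in> F'" for e using sink'[OF that] v by blast
  have sink_v: "\<sigma> e = Some v \<longleftrightarrow> U' \<noteq> {} \<and> e = e0" if "e \<in> F'" for e
    using \<sigma>_F'[OF that] \<sigma>'_not_v[OF that] by simp
  have "inj_on \<sigma> {e\<in>F' \<union> Fv. \<sigma> e \<noteq> None}"
  proof (rule inj_onI)
    fix e1 e2 assume e1: "e1 \<in> {e\<in>F' \<union> Fv. \<sigma> e \<noteq> None}" and e2: "e2 \<in> {e\<in>F' \<union> Fv. \<sigma> e \<noteq> None}"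
      and eq: "\<sigma> e1 = \<sigma> e2"
    have F': "e1 \<in> F'" "e2 \<in> F'" using e1 e2 assigned_in_F' by blast+
    show "e1 = e2"
    proof (cases "U' \<noteq> {} \<and> (e1 = e0 \<or> e2 = e0)")
      case True
      then have "\<sigma> e1 = Some v \<or> \<sigma> e2 = Some v" using sink_v F' by blast
      then have "\<sigma> e1 = Some v" "\<sigma> e2 = Some v" using eq by auto
      then show ?thesis using sink_v[OF F'(1)] sink_v[OF F'(2)] by blast
    next
      case False
      then have "\<sigma> e1 = \<sigma>' e1" "\<sigma> e2 = \<sigma>' e2" using \<sigma>_F' F' by auto
      then have "\<sigma>' e1 = \<sigma>' e2" "\<sigma>' e1 \<noteq> None" using eq e1 by auto
      then show ?thesis using sa' F' by (auto simp: sink_assignment_def inj_on_def)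
    qed
  qed
  moreover have "u \<in> insert v V' \<and> (\<forall>x\<in>e. r x < r u)"
    if "e \<in> F' \<union> Fv" "\<sigma> e = Some u" for e u
  proof -
    have "e \<in> F'" "v \<notin> e" using that assigned_in_F' by auto
    have rx: "r x = r' x" if "x \<in> e" for x using \<open>v \<notin> e\<close> that by (auto simp: r_def)
    show ?thesis
    proof (cases "U' \<noteq> {} \<and> e = e0")
      case True
      then have "u = v" using that \<sigma>_F'[OF \<open>e \<in> F'\<close>] by simp
      then show ?thesis using F'V' \<open>e \<in> F'\<close> r_less_R rx by (auto simp: r_def)
    next
      case False
      then have "\<sigma>' e = Some u" using that(2) \<sigma>_F'[OF \<open>e \<in> F'\<close>] by (auto split: if_splits)
      then have "u \<in> V'" "\<forall>x\<in>e. r' x < r' u" using sink' \<open>e \<in> F'\<close> by auto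
      moreover have "r u = r' u" using \<open>u \<in> V'\<close> v by (auto simp: r_def)
      ultimately show ?thesis using rx by auto
    qed
  qed
  moreover have "card {e\<in>F' \<union> Fv. \<sigma> e = None} \<le> card Fv + (card U' - 1)"
  proof -
    have "{e\<in>F' \<union> Fv. \<sigma> e = None} \<subseteq> Fv \<union> (U' - {e0})"
      using v_notin by (auto simp: \<sigma>_def U'_def)
    moreover have "card (U' - {e0}) = card U' - 1"
      using e0 by (cases "U' = {}") (auto simp: card_Diff_singleton_if)
    moreover have "finite U'" using fin' by (simp add: U'_def)
    ultimately show ?thesis using Fv card_Un_le[of Fv "U' - {e0}"]
      by (metis (no_types, lifting) card_mono finite_Diff finite_UnI le_trans)
  qed
  ultimately show ?thesis unfolding sink_assignment_def U'_def by blast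
qed

text \<open>Main scheduling lemma: a family of at most |V| + b - 2 edges (b >= 1) has a sink
  assignment with at most b unassigned edges.  Induction on |V|, removing a vertex of
  minimum degree.\<close>
lemma sink_assignment_exists:
  fixes F :: "'a set set" and b :: int
  assumes "finite V" "\<forall>e\<in>F. e \<subseteq> V \<and> card e = 2" "b \<ge> 1"
    "int (card F) \<le> int (card V) + b - 2"
  shows "\<exists>r \<sigma>. sink_assignment V F r \<sigma> \<and> int (card {e\<in>F. \<sigma> e = None}) \<le> b"
  using assms
proof (induction "card V" arbitrary: V F b rule: less_induct)
  case less
  note finV = less.prems(1) and F2 = less.prems(2) and b1 = less.prems(3) and cardF = less.prems(4)
  show ?case
  proof (cases "V = {}")
    case True
    then have "F = {}" using F2 by (auto simp: card_gt_0_iff)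
    then show ?thesis using b1 by (auto simp: sink_assignment_def)
  next
    case False
    then obtain v where vV: "v \<in> V" and deg: "int (card {e\<in>F. v \<in> e}) \<le> b"
      using low_degree_vertex[OF finV _ F2 b1 cardF] by blast
    define F' where "F' = {e\<in>F. v \<notin> e}"
    define Fv where "Fv = {e\<in>F. v \<in> e}"
    define b' where "b' = b - int (card Fv) + 1"
    have "F \<subseteq> Pow V" using F2 by blast
    then have finF: "finite F" using finV finite_subset by blast
    have split: "F = F' \<union> Fv" "F' \<inter> Fv = {}" by (auto simp: F'_def Fv_def)
    then have cardF': "card F = card F' + card Fv"
      using finF by (metis card_Un_disjoint finite_Un)
    have F2': "\<forall>e\<in>F'. e \<subseteq> V - {v} \<and> card e = 2" using F2 by (auto simp: F'_def)
    have card_less: "card (V - {v}) < card V" by (rule card_Diff1_less[OF finV vV])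
    have finV': "finite (V - {v})" using finV by simp
    have "card (V - {v}) = card V - 1" "card V \<ge> 1"
      using finV vV by (auto simp: Suc_le_eq card_gt_0_iff)
    then have cardF'': "int (card F') \<le> int (card (V - {v})) + b' - 2"
      using cardF cardF' by (simp add: b'_def of_nat_diff)
    have b'1: "b' \<ge> 1" using deg by (simp add: b'_def Fv_def)
    obtain r' \<sigma>' where sa': "sink_assignment (V - {v}) F' r' \<sigma>'"
      and cnt': "int (card {e\<in>F'. \<sigma>' e = None}) \<le> b'"
      using less.hyps[OF card_less finV' F2' b'1 cardF''] by blast
    have "finite F'" "finite Fv" using finF by (simp_all add: F'_def Fv_def)
    moreover have "\<forall>e\<in>F'. e \<subseteq> V - {v}" "\<forall>e\<in>Fv. v \<in> e" using F2' by (auto simp: Fv_def)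
    ultimately have "\<exists>r \<sigma>. sink_assignment (insert v (V - {v})) (F' \<union> Fv) r \<sigma> \<and>
        card {e\<in>F' \<union> Fv. \<sigma> e = None} \<le> card Fv + (card {e\<in>F'. \<sigma>' e = None} - 1)"
      by (intro sink_assignment_extend[OF sa' finV']) auto
    then obtain r \<sigma> where sa: "sink_assignment V F r \<sigma>"
      and cnt: "card {e\<in>F. \<sigma> e = None} \<le> card Fv + (card {e\<in>F'. \<sigma>' e = None} - 1)"
      unfolding insert_Diff[OF vV] split(1)[symmetric] by blast
    have "int (card {e\<in>F. \<sigma> e = None}) \<le> b"
    proof (cases "card {e\<in>F'. \<sigma>' e = None} = 0")
      case True
      then show ?thesis using cnt deg by (simp add: Fv_def)
    next
      case False
      then show ?thesis using cnt cnt' by (simp add: b'_def of_nat_diff)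
    qed
    then show ?thesis using sa by blast
  qed
qed

lemma competition_number_le_from_outer_edges:
  fixes b :: int
  assumes sg: "simple_graph V E" and cl: "clique V E K" and b1: "b \<ge> 1"
    and few: "int (card (outer_edges E K)) \<le> int (card V) + b - 2"
  shows "int (competition_number V E) \<le> b + 1"
proof -
  have "finite V" using sg by (simp add: simple_graph_def)
  moreover have "\<forall>e\<in>outer_edges E K. e \<subseteq> V \<and> card e = 2"
    using sg by (auto simp: outer_edges_def simple_graph_def)
  ultimately obtain r \<sigma> where sa: "sink_assignment V (outer_edges E K) r \<sigma>"
    and cnt: "int (card {e\<in>outer_edges E K. \<sigma> e = None}) \<le> b"
    using sink_assignment_exists[OF _ _ b1 few] by blast
  show ?thesis using competition_number_le_unassigned[OF sg cl sa] cnt by linarith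
qed

lemma finite_holes: "simple_graph V E \<Longrightarrow> finite {S. hole V E S}"
  by (rule finite_subset[of _ "Pow V"]) (auto simp: hole_def simple_graph_def)

lemma hole_induced:
  assumes RV: "R \<subseteq> V"
  shows "hole R (induced E R) S \<longleftrightarrow> hole V E S \<and> S \<subseteq> R"
proof -
  define cyc where "cyc F xs \<longleftrightarrow> distinct xs \<and> set xs = S \<and> length xs \<ge> 4 \<and>
     (\<forall>i<length xs. \<forall>j<length xs.
        F (xs ! i) (xs ! j) \<longleftrightarrow> (j = Suc i mod length xs \<or> i = Suc j mod length xs))"
    for F :: "'a \<Rightarrow> 'a \<Rightarrow> bool" and xs
  have hole_cyc: "hole W F S \<longleftrightarrow> S \<subseteq> W \<and> (\<exists>xs. cyc F xs)" for W F
    by (simp add: hole_def cyc_def)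
  have "cyc (induced E R) xs \<longleftrightarrow> cyc E xs" if "S \<subseteq> R" for xs
  proof -
    have "set xs = S \<Longrightarrow> \<forall>i<length xs. xs ! i \<in> R" using that nth_mem by blast
    then show ?thesis by (auto simp: cyc_def induced_def)
  qed
  then show ?thesis using RV unfolding hole_cyc by blast
qed

lemma hole_edges_induced: "S \<subseteq> R \<Longrightarrow> hole_edges (induced E R) S = hole_edges E S"
  unfolding hole_edges_def induced_def by blast

lemma suc_mod_lt: "x < L \<Longrightarrow> Suc x mod L = (if Suc x = L then 0 else Suc x)"
  by (cases "Suc x = L") auto

lemma pred_mod: assumes "j < L" "i = Suc j mod L" shows "j = (i + L - 1) mod L"
  using assms by (cases "Suc j = L") auto

lemma hole_no_three_neighbours:
  assumes "hole V E S" "x \<in> S" "a \<in> S" "b \<in> S" "c \<in> S" "E x a" "E x b" "E x c"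
    "a \<noteq> b" "a \<noteq> c" "b \<noteq> c"
  shows False
proof -
  obtain xs where xs: "set xs = S"
     "\<forall>i<length xs. \<forall>j<length xs. E (xs!i) (xs!j) \<longleftrightarrow> (j = Suc i mod length xs \<or> i = Suc j mod length xs)"
    using assms(1) by (auto simp: hole_def)
  define L where "L = length xs"
  obtain i where i: "i < L" "xs!i = x" using assms(2) xs(1) by (auto simp: L_def in_set_conv_nth)
  have nbr: "j = Suc i mod L \<or> j = (i + L - 1) mod L" if "j < L" "E x (xs!j)" for j
    using xs(2) i that pred_mod[of j L i] by (auto simp: L_def)
  obtain ja jb jc where "ja < L" "xs!ja = a" "jb < L" "xs!jb = b" "jc < L" "xs!jc = c"
    using assms(3-5) xs(1) by (auto simp: L_def in_set_conv_nth)
  moreover have "ja \<noteq> jb" "ja \<noteq> jc" "jb \<noteq> jc" using calculation assms(9-11) by auto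
  ultimately show False using nbr[of ja] nbr[of jb] nbr[of jc] assms(6-8) by auto
qed

section \<open>Shortest walks are induced paths\<close>

definition walk :: "('a \<Rightarrow> 'a \<Rightarrow> bool) \<Rightarrow> (nat \<Rightarrow> 'a) \<Rightarrow> nat \<Rightarrow> bool" where
  "walk R f m \<longleftrightarrow> (\<forall>i<m. R (f i) (f (Suc i)))"

lemma walk_shortcut:
  assumes w: "walk R f m" and ij: "i < j" "j \<le> m" and chord: "R (f i) (f j)"
  shows "\<exists>g. walk R g (m - (j - Suc i)) \<and> g 0 = f 0 \<and> g (m - (j - Suc i)) = f m"
proof (intro exI conjI)
  define g where "g t = (if t \<le> i then f t else f (t - Suc i + j))" for t
  show "walk R g (m - (j - Suc i))" unfolding walk_def
  proof (intro allI impI)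
    fix t assume t: "t < m - (j - Suc i)"
    consider "t < i" | "t = i" | "i < t" by linarith
    then show "R (g t) (g (Suc t))"
    proof cases
      case 1 then show ?thesis using w ij by (simp add: g_def walk_def)
    next
      case 2 then show ?thesis using chord by (simp add: g_def)
    next
      case 3
      then have "Suc t - Suc i + j = Suc (t - Suc i + j)" "t - Suc i + j < m" using t ij by auto
      then show ?thesis using w 3 by (simp add: g_def walk_def)
    qed
  qed
  show "g 0 = f 0" by (simp add: g_def)
  have "\<not> m - (j - Suc i) \<le> i" "m - (j - Suc i) - Suc i + j = m" using ij by auto
  then show "g (m - (j - Suc i)) = f m" by (simp only: g_def if_False)
qed

lemma shortest_walk:
  assumes "R\<^sup>*\<^sup>* a b" "a \<in> A" "b \<in> B"
  obtains f m where "f 0 \<in> A" "f m \<in> B" "walk R f m"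
    "\<And>k. 0 < k \<Longrightarrow> k \<le> m \<Longrightarrow> f k \<notin> A" "\<And>k. k < m \<Longrightarrow> f k \<notin> B"
    "\<And>i j. Suc i < j \<Longrightarrow> j \<le> m \<Longrightarrow> \<not> R (f i) (f j)"
    "\<And>i j. i < j \<Longrightarrow> j \<le> m \<Longrightarrow> f i \<noteq> f j"
proof -
  define P where "P n \<longleftrightarrow> (\<exists>f. f 0 \<in> A \<and> f n \<in> B \<and> walk R f n)" for n
  obtain n where "(R ^^ n) a b" using assms(1) rtranclp_imp_relpowp by fast
  then have "P n" using assms(2,3) unfolding P_def relpowp_fun_conv walk_def by blast
  define m where "m = (LEAST n. P n)"
  have "P m" unfolding m_def by (rule LeastI) fact
  then obtain f where f0: "f 0 \<in> A" and fm: "f m \<in> B" and w: "walk R f m"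
    by (auto simp: P_def)
  have shorter: "\<not> P n" if "n < m" for n using not_less_Least[of n P] that by (simp add: m_def)
  have notA: "f k \<notin> A" if "0 < k" "k \<le> m" for k
  proof
    assume "f k \<in> A"
    then have "P (m - k)" unfolding P_def using fm w that
      by (intro exI[of _ "\<lambda>t. f (t + k)"]) (auto simp: walk_def)
    then show False using shorter that by simp
  qed
  have notB: "f k \<notin> B" if "k < m" for k
  proof
    assume "f k \<in> B"
    then have "P k" unfolding P_def using f0 w that by (intro exI[of _ f]) (auto simp: walk_def)
    then show False using shorter that by simp
  qed
  have chordless: "\<not> R (f i) (f j)" if ij: "Suc i < j" "j \<le> m" for i j
  proof
    assume "R (f i) (f j)"
    then obtain g where "walk R g (m - (j - Suc i))" "g 0 = f 0" "g (m - (j - Suc i)) = f m"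
      using walk_shortcut[OF w Suc_lessD[OF ij(1)] ij(2)] by blast
    then have "P (m - (j - Suc i))" unfolding P_def using f0 fm by metis
    then show False using shorter ij by simp
  qed
  have distinct: "f i \<noteq> f j" if "i < j" "j \<le> m" for i j
  proof
    assume fij: "f i = f j"
    show False
    proof (cases "j = m")
      case True then show False using fij fm notB[of i] that by simp
    next
      case False
      then have "R (f i) (f (Suc j))" using w fij that by (simp add: walk_def)
      then show False using chordless[of i "Suc j"] that False by simp
    qed
  qed
  show ?thesis by (rule that[OF f0 fm w notA notB chordless distinct])
qed

section \<open>Holes through a vertex\<close>

lemma hole_from_induced_path:
  assumes sg: "simple_graph V E" and vV: "v \<in> V" and m2: "2 \<le> m"
    and fV: "\<forall>k\<le>m. f k \<in> V \<and> f k \<noteq> v" and finj: "inj_on f {..m}"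
    and path: "\<forall>k\<le>m. \<forall>l\<le>m. E (f k) (f l) \<longleftrightarrow> (l = Suc k \<or> k = Suc l)"
    and apex: "\<forall>k\<le>m. E v (f k) \<longleftrightarrow> (k = 0 \<or> k = m)"
  shows "hole V E (insert v (f ` {..m}))"
proof -
  define xs where "xs = v # map f [0..<Suc m]"
  define L where "L = length xs"
  have L: "L = m + 2" by (simp add: L_def xs_def)
  have xs0: "xs ! 0 = v" by (simp add: xs_def)
  have xsS: "xs ! Suc k = f k" if "k \<le> m" for k
    using that by (simp add: xs_def nth_map del: upt_Suc)
  have set_xs: "set xs = insert v (f ` {..m})"
    by (simp add: xs_def lessThan_Suc_atMost atLeast0LessThan del: upt_Suc)
  have "distinct xs"
    using finj fV by (auto simp: xs_def distinct_map lessThan_Suc_atMost atLeast0LessThan simp del: upt_Suc)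
  have Suc_mod: "Suc i mod L = (if i = Suc m then 0 else Suc i)" if "i < L" for i
    using suc_mod_lt[of i L] that L by simp
  have adj: "E (xs ! i) (xs ! j) \<longleftrightarrow> (j = Suc i mod L \<or> i = Suc j mod L)"
    if "i < L" "j < L" for i j
  proof (cases i)
    case 0
    show ?thesis
    proof (cases j)
      case 0
      then show ?thesis using \<open>i = 0\<close> xs0 simple_graph_irrefl[OF sg] L m2 by simp
    next
      case (Suc l)
      then have "l \<le> m" using that L by simp
      then show ?thesis
        using apex xs0 xsS[of l] \<open>i = 0\<close> Suc Suc_mod[of j] Suc_mod[of 0] that L m2 by auto
    qed
  next
    case (Suc k)
    then have k: "k \<le> m" using that L by simp
    show ?thesis
    proof (cases j)
      case 0
      have "E (f k) v \<longleftrightarrow> E v (f k)" using simple_graph_sym[OF sg] by blast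
      then show ?thesis
        using apex k xs0 xsS[OF k] \<open>j = 0\<close> Suc Suc_mod[of i] Suc_mod[of 0] that L m2 by auto
    next
      case (Suc l)
      then have "l \<le> m" using that L by simp
      then show ?thesis
        using path k xsS[OF k] xsS[of l] \<open>i = Suc k\<close> Suc Suc_mod[of i] Suc_mod[of j] that L
        by auto
    qed
  qed
  have "set xs \<subseteq> V" using set_xs fV vV by auto
  then show ?thesis
    unfolding hole_def set_xs[symmetric] using \<open>distinct xs\<close> adj L m2 by (auto simp: L_def)
qed

text \<open>If v lies on no triangle and G - v is connected, then for every split of N(v) into two
  nonempty parts A, B there is a hole through v meeting both parts: close a shortest A-B path
  in G - v through v.\<close>
lemma hole_through_vertex:
  assumes sg: "simple_graph V E" and vV: "v \<in> V"
    and conn: "connected_graph (V - {v}) (induced E (V - {v}))"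
    and A: "A \<noteq> {}" and B: "B \<noteq> {}" and AB: "A \<inter> B = {}" and N: "A \<union> B = {u. E v u}"
    and indep: "\<forall>x y. E v x \<longrightarrow> E v y \<longrightarrow> \<not> E x y"
  shows "\<exists>S. hole V E S \<and> v \<in> S \<and> A \<inter> S \<noteq> {} \<and> B \<inter> S \<noteq> {}"
proof -
  define E' where "E' = induced E (V - {v})"
  obtain a0 b0 where a0: "a0 \<in> A" and b0: "b0 \<in> B" using A B by blast
  have "a0 \<in> V - {v}" "b0 \<in> V - {v}"
    using a0 b0 N simple_graph_edge_in[OF sg] simple_graph_irrefl[OF sg] by blast+
  then have walk_ab: "E'\<^sup>*\<^sup>* a0 b0" using conn by (simp add: connected_graph_def E'_def)
  obtain f m where f0: "f 0 \<in> A" and fm: "f m \<in> B" and w: "walk E' f m"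
    and notA: "\<And>k. 0 < k \<Longrightarrow> k \<le> m \<Longrightarrow> f k \<notin> A" and notB: "\<And>k. k < m \<Longrightarrow> f k \<notin> B"
    and chordless: "\<And>i j. Suc i < j \<Longrightarrow> j \<le> m \<Longrightarrow> \<not> E' (f i) (f j)"
    and distinct: "\<And>i j. i < j \<Longrightarrow> j \<le> m \<Longrightarrow> f i \<noteq> f j"
    by (rule shortest_walk[OF walk_ab a0 b0], rule that)
  have step: "E (f i) (f (Suc i)) \<and> f i \<in> V - {v} \<and> f (Suc i) \<in> V - {v}" if "i < m" for i
    using w that by (simp add: walk_def E'_def induced_def)
  have "m \<noteq> 0" using f0 fm AB by auto
  have fV: "f k \<in> V - {v}" if "k \<le> m" for k
  proof (cases "k < m")
    case True then show ?thesis using step by blast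
  next
    case False
    then have "k = Suc (m - 1)" using that \<open>m \<noteq> 0\<close> by simp
    then show ?thesis using step[of "m - 1"] \<open>m \<noteq> 0\<close> by simp
  qed
  have nbr: "E v x \<longleftrightarrow> x \<in> A \<or> x \<in> B" for x
    using N by (metis Un_iff mem_Collect_eq)
  have apex: "E v (f k) \<longleftrightarrow> (k = 0 \<or> k = m)" if "k \<le> m" for k
  proof
    assume "E v (f k)"
    then show "k = 0 \<or> k = m" using nbr notA notB that by (metis le_neq_implies_less not_gr0)
  next
    assume "k = 0 \<or> k = m"
    then show "E v (f k)" using nbr f0 fm by blast
  qed
  have "m \<noteq> 1"
  proof
    assume "m = 1"
    then have "E v (f 0)" "E v (f 1)" "E (f 0) (f 1)" using apex step[of 0] by auto
    then show False using indep by blast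
  qed
  then have m2: "2 \<le> m" using \<open>m \<noteq> 0\<close> by simp
  have path: "E (f k) (f l) \<longleftrightarrow> (l = Suc k \<or> k = Suc l)" if "k \<le> m" "l \<le> m" for k l
  proof
    assume Ekl: "E (f k) (f l)"
    then have "E' (f k) (f l)" "E' (f l) (f k)"
      using fV that simple_graph_sym[OF sg] by (auto simp: E'_def induced_def)
    have "k \<noteq> l" using Ekl simple_graph_irrefl[OF sg] by auto
    show "l = Suc k \<or> k = Suc l"
    proof (rule ccontr)
      assume "\<not> (l = Suc k \<or> k = Suc l)"
      with \<open>k \<noteq> l\<close> have "Suc k < l \<or> Suc l < k" by linarith
      then show False using chordless that \<open>E' (f k) (f l)\<close> \<open>E' (f l) (f k)\<close> by blast
    qed
  next
    assume "l = Suc k \<or> k = Suc l"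
    then show "E (f k) (f l)" using step simple_graph_sym[OF sg] that by auto
  qed
  have "inj_on f {..m}"
  proof (rule inj_onI)
    fix i j assume "i \<in> {..m}" "j \<in> {..m}" "f i = f j"
    then show "i = j" using distinct[of i j] distinct[of j i] by (cases i j rule: linorder_cases) auto
  qed
  moreover have "\<forall>k\<le>m. f k \<in> V \<and> f k \<noteq> v" using fV by blast
  ultimately have "hole V E (insert v (f ` {..m}))"
    using hole_from_induced_path[OF sg vV m2] apex path by simp
  then show ?thesis using f0 fm by blast
qed

text \<open>With edge-disjoint holes, a vertex v on no triangle with G - v connected has at most
  two neighbours, and if it has two, it lies on a hole; hence deg v <= 1 + #holes through v.\<close>
lemma degree_le_holes_through:
  assumes sg: "simple_graph V E" and hd: "holes_edge_disjoint V E" and vV: "v \<in> V"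
    and conn: "connected_graph (V - {v}) (induced E (V - {v}))"
    and indep: "\<forall>x y. E v x \<longrightarrow> E v y \<longrightarrow> \<not> E x y"
  shows "card {u. E v u} \<le> 1 + card {S. hole V E S \<and> v \<in> S}"
proof -
  define N where "N = {u. E v u}"
  define HV where "HV = {S. hole V E S \<and> v \<in> S}"
  have finN: "finite N"
    using sg finite_subset[of N V] by (auto simp: N_def simple_graph_def)
  have finHV: "finite HV" using finite_holes[OF sg] by (simp add: HV_def)
  note hole_through = hole_through_vertex[OF sg vV conn _ _ _ _ indep]
  show ?thesis
  proof (cases "card N \<le> 1")
    case False
    then have "N \<noteq> {}" by auto
    then obtain a where aN: "a \<in> N" by blast
    have "card (N - {a}) > 0" using False aN finN by simp
    then have "N - {a} \<noteq> {}" by force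
    moreover have "{a} \<union> (N - {a}) = {u. E v u}" using aN by (auto simp: N_def)
    ultimately obtain H1 where H1: "hole V E H1" "v \<in> H1" "{a} \<inter> H1 \<noteq> {}" "(N - {a}) \<inter> H1 \<noteq> {}"
      using hole_through[of "{a}" "N - {a}"] by blast
    then obtain b where b: "b \<in> N" "b \<noteq> a" "b \<in> H1" by blast
    have "a \<in> H1" using H1(3) by blast
    note H1 = H1(1,2) this
    have "H1 \<in> HV" using H1 by (simp add: HV_def)
    then have HV1: "card HV \<ge> 1" using finHV by (auto simp: Suc_le_eq card_gt_0_iff)
    have "card N \<le> 2"
    proof (rule ccontr)
      assume "\<not> card N \<le> 2"
      then have "card (N - {a, b}) > 0" using aN b finN by (simp add: card_Diff_subset)
      then have "N - {a, b} \<noteq> {}" by force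
      moreover have "{a, b} \<union> (N - {a, b}) = {u. E v u}" using aN b by (auto simp: N_def)
      ultimately obtain H2 where H2: "hole V E H2" "v \<in> H2" "{a, b} \<inter> H2 \<noteq> {}"
        "(N - {a, b}) \<inter> H2 \<noteq> {}"
        using hole_through[of "{a, b}" "N - {a, b}"] by blast
      then obtain x y where x: "x \<in> {a, b}" "x \<in> H2" and y: "y \<in> N - {a, b}" "y \<in> H2"
        by blast
      have "H1 \<noteq> H2"
      proof
        assume "H1 = H2"
        then show False
          using hole_no_three_neighbours[OF H1(1,2,3) b(3), of y] aN b y by (auto simp: N_def)
      qed
      moreover have "{v, x} \<in> hole_edges E H1" "{v, x} \<in> hole_edges E H2"
        using x H1 H2 aN b by (auto simp: hole_edges_def N_def)
      ultimately show False using hd H1(1) H2(1) by (auto simp: holes_edge_disjoint_def)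
    qed
    then show ?thesis using HV1 by (simp add: N_def HV_def)
  qed (simp add: N_def)
qed

section \<open>Deleting a non-cut vertex outside the clique\<close>

lemma connected_induced_insert:
  assumes sym: "\<And>x y. E x y \<Longrightarrow> E y x" and conn: "connected_graph R (induced E R)"
    and r: "r \<in> R" and rw: "E r w"
  shows "connected_graph (insert w R) (induced E (insert w R))"
proof -
  define E2 where "E2 = induced E (insert w R)"
  have lift: "(induced E R)\<^sup>*\<^sup>* \<le> E2\<^sup>*\<^sup>*"
    by (rule rtranclp_mono) (auto simp: E2_def induced_def)
  have to_r: "E2\<^sup>*\<^sup>* x r" if "x \<in> insert w R" for x
  proof (cases "x = w")
    case True
    then have "E2 x r" using sym rw r by (auto simp: E2_def induced_def)
    then show ?thesis by simp
  next
    case False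
    then have "(induced E R)\<^sup>*\<^sup>* x r" using conn that r by (simp add: connected_graph_def)
    then show ?thesis using lift by blast
  qed
  have "symp E2" using sym by (auto simp: E2_def induced_def symp_def)
  then have "E2\<^sup>*\<^sup>* x y" if "x \<in> insert w R" "y \<in> insert w R" for x y
    using to_r[OF that(1)] to_r[OF that(2)] by (meson rtranclp_trans sympD symp_rtranclp)
  then show ?thesis by (simp add: connected_graph_def E2_def)
qed

lemma leaving_edge:
  assumes "E\<^sup>*\<^sup>* a b" "a \<in> R" "b \<notin> R"
  shows "\<exists>x y. E x y \<and> x \<in> R \<and> y \<notin> R"
  using assms by (induction rule: rtranclp_induct) auto

text \<open>A connected graph has a vertex outside a given nonempty proper clique whose deletion
  leaves the graph connected: grow a maximal connected proper vertex set containing K; the one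
  vertex it misses is the desired one.\<close>
lemma exists_noncut_vertex:
  assumes sg: "simple_graph V E" and cg: "connected_graph V E" and cl: "clique V E K"
    and K0: "K \<noteq> {}" and KV: "K \<noteq> V"
  shows "\<exists>v\<in>V - K. connected_graph (V - {v}) (induced E (V - {v}))"
proof -
  define C where "C = {R. K \<subseteq> R \<and> R \<subseteq> V \<and> R \<noteq> V \<and> connected_graph R (induced E R)}"
  have KsV: "K \<subseteq> V" using cl by (simp add: clique_def)
  have "(induced E K)\<^sup>*\<^sup>* x y" if "x \<in> K" "y \<in> K" for x y
  proof (cases "x = y")
    case False
    then have "induced E K x y" using cl that by (simp add: clique_def induced_def)
    then show ?thesis by simp
  qed simp
  then have "connected_graph K (induced E K)" using K0 by (simp add: connected_graph_def)
  then have "K \<in> C" using KsV KV by (simp add: C_def)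
  moreover have "finite C"
    using sg finite_subset[of C "Pow V"] by (auto simp: C_def simple_graph_def)
  ultimately obtain R where R: "R \<in> C" and Rmax: "\<forall>R'\<in>C. R \<subseteq> R' \<longrightarrow> R = R'"
    using finite_has_maximal2[of C K] by blast
  obtain k0 where k0: "k0 \<in> K" using K0 by blast
  obtain w' where w': "w' \<in> V" "w' \<notin> R" using R by (auto simp: C_def)
  have "E\<^sup>*\<^sup>* k0 w'" using cg k0 KsV w' by (auto simp: connected_graph_def)
  then obtain r w where rw: "E r w" "r \<in> R" "w \<notin> R"
    using leaving_edge[of E k0 w' R] k0 R w' by (auto simp: C_def)
  have wV: "w \<in> V" using simple_graph_edge_in[OF sg rw(1)] by blast
  have "connected_graph (insert w R) (induced E (insert w R))"
    by (rule connected_induced_insert[of E R r w]) (use simple_graph_sym[OF sg] R rw in \<open>auto simp: C_def\<close>)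
  have "insert w R = V"
  proof (rule ccontr)
    assume "insert w R \<noteq> V"
    then have "insert w R \<in> C"
      using R wV \<open>connected_graph (insert w R) _\<close> by (auto simp: C_def)
    then show False using Rmax rw(3) by blast
  qed
  then have "V - {w} = R" using rw(3) by auto
  moreover have "w \<notin> K" using R rw(3) by (auto simp: C_def)
  ultimately show ?thesis using wV R by (auto simp: C_def)
qed

lemma card_outer_edges_delete:
  assumes sg: "simple_graph V E" and vK: "v \<notin> K"
  shows "card (outer_edges E K) = card (outer_edges (induced E (V - {v})) K) + card {u. E v u}"
proof -
  define N where "N = {u. E v u}"
  define F' where "F' = outer_edges (induced E (V - {v})) K"
  have v_notin: "v \<notin> e" if "e \<in> F'" for e
    using that by (auto simp: F'_def outer_edges_def induced_def)
  have split: "outer_edges E K = F' \<union> (\<lambda>u. {v, u}) ` N"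
  proof
    show "outer_edges E K \<subseteq> F' \<union> (\<lambda>u. {v, u}) ` N"
    proof
      fix e assume "e \<in> outer_edges E K"
      then obtain x y where e: "e = {x, y}" "E x y" "\<not> (x \<in> K \<and> y \<in> K)"
        by (auto simp: outer_edges_def)
      have xyV: "x \<in> V" "y \<in> V" and Eyx: "E y x" using e(2) sg by (auto simp: simple_graph_def)
      consider "x = v" | "y = v" | "x \<noteq> v" "y \<noteq> v" by blast
      then show "e \<in> F' \<union> (\<lambda>u. {v, u}) ` N"
      proof cases
        case 1
        then have "e = (\<lambda>u. {v, u}) y" "y \<in> N" using e by (auto simp: N_def)
        then show ?thesis by blast
      next
        case 2
        then have "e = (\<lambda>u. {v, u}) x" "x \<in> N" using e Eyx by (auto simp: N_def)
        then show ?thesis by blast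
      next
        case 3
        then have "induced E (V - {v}) x y" using e(2) xyV by (simp add: induced_def)
        then have "e \<in> F'" unfolding F'_def outer_edges_def using e by blast
        then show ?thesis by blast
      qed
    qed
    have "F' \<subseteq> outer_edges E K" unfolding F'_def outer_edges_def induced_def by blast
    moreover have "{v, u} \<in> outer_edges E K" if "u \<in> N" for u
      unfolding outer_edges_def using that vK by (auto simp: N_def)
    ultimately show "F' \<union> (\<lambda>u. {v, u}) ` N \<subseteq> outer_edges E K" by blast
  qed
  have "F' \<inter> (\<lambda>u. {v, u}) ` N = {}" using v_notin by blast
  moreover have "finite F'"
    using finite_outer_edges[OF simple_graph_induced[OF sg]] by (simp add: F'_def)
  moreover have "finite N" using sg finite_subset[of N V] by (auto simp: N_def simple_graph_def)
  moreover have "inj_on (\<lambda>u. {v, u}) N"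
    using simple_graph_irrefl[OF sg] by (auto simp: inj_on_def doubleton_eq_iff N_def)
  ultimately show ?thesis unfolding split by (simp add: card_Un_disjoint card_image F'_def N_def)
qed

lemma num_holes_delete:
  assumes sg: "simple_graph V E"
  shows "num_holes V E = num_holes (V - {v}) (induced E (V - {v})) + card {S. hole V E S \<and> v \<in> S}"
proof -
  have SV: "S \<subseteq> V" if "hole V E S" for S using that by (simp add: hole_def)
  have "{S. hole V E S} = {S. hole (V - {v}) (induced E (V - {v})) S} \<union> {S. hole V E S \<and> v \<in> S}"
    using SV by (auto simp: hole_induced[of "V - {v}" V])
  moreover have "finite {S. hole (V - {v}) (induced E (V - {v})) S}"
    using finite_holes[OF simple_graph_induced[OF sg]] by blast
  moreover have "finite {S. hole V E S \<and> v \<in> S}" using finite_holes[OF sg] by simp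
  moreover have "{S. hole (V - {v}) (induced E (V - {v})) S} \<inter> {S. hole V E S \<and> v \<in> S} = {}"
    by (auto simp: hole_induced[of "V - {v}" V])
  ultimately show ?thesis unfolding num_holes_def by (simp add: card_Un_disjoint)
qed

lemma holes_edge_disjoint_induced:
  assumes "holes_edge_disjoint V E" "R \<subseteq> V"
  shows "holes_edge_disjoint R (induced E R)"
  using assms by (auto simp: holes_edge_disjoint_def hole_induced hole_edges_induced)

section \<open>Counting outer edges\<close>

lemma outer_edges_bound:
  assumes "simple_graph V E" "connected_graph V E" "holes_edge_disjoint V E" "clique V E K"
    "K \<noteq> {}" "\<forall>x y z. E x y \<longrightarrow> E y z \<longrightarrow> E x z \<longrightarrow> x \<in> K"
  shows "card (outer_edges E K) + card K \<le> card V + num_holes V E"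
  using assms
proof (induction "card V" arbitrary: V E rule: less_induct)
  case less
  note sg = less.prems(1) and cg = less.prems(2) and hd = less.prems(3) and cl = less.prems(4)
    and K0 = less.prems(5) and tri = less.prems(6)
  have finV: "finite V" using sg by (simp add: simple_graph_def)
  have KV: "K \<subseteq> V" using cl by (simp add: clique_def)
  show ?case
  proof (cases "V = K")
    case True
    then have "outer_edges E K = {}" using sg by (auto simp: outer_edges_def simple_graph_def)
    then show ?thesis using True by simp
  next
    case False
    then obtain v where vV: "v \<in> V" "v \<notin> K"
      and conn: "connected_graph (V - {v}) (induced E (V - {v}))"
      using exists_noncut_vertex[OF sg cg cl K0] by blast
    define E' where "E' = induced E (V - {v})"
    have "card (V - {v}) < card V" using finV vV(1) by (rule card_Diff1_less)
    moreover have "simple_graph (V - {v}) E'" using simple_graph_induced[OF sg] by (simp add: E'_def)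
    moreover have "holes_edge_disjoint (V - {v}) E'"
      using holes_edge_disjoint_induced[OF hd] by (simp add: E'_def)
    moreover have "clique (V - {v}) E' K" using cl vV by (auto simp: clique_def E'_def induced_def)
    moreover have "\<forall>x y z. E' x y \<longrightarrow> E' y z \<longrightarrow> E' x z \<longrightarrow> x \<in> K"
      using tri by (auto simp: E'_def induced_def)
    ultimately have IH: "card (outer_edges E' K) + card K \<le> card (V - {v}) + num_holes (V - {v}) E'"
      using less.hyps conn K0 by (simp add: E'_def)
    have "\<forall>x y. E v x \<longrightarrow> E v y \<longrightarrow> \<not> E x y" using tri vV(2) by blast
    then have "card {u. E v u} \<le> 1 + card {S. hole V E S \<and> v \<in> S}"
      using degree_le_holes_through[OF sg hd vV(1) conn] by blast
    moreover have "card (V - {v}) = card V - 1" "card V \<ge> 1"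
      using finV vV(1) by (auto simp: Suc_le_eq card_gt_0_iff)
    ultimately show ?thesis
      using IH card_outer_edges_delete[OF sg vV(2)] num_holes_delete[OF sg, of v]
      unfolding E'_def by linarith
  qed
qed

lemma finite_cliques: "simple_graph V E \<Longrightarrow> finite {K. clique V E K}"
  by (rule finite_subset[of _ "Pow V"]) (auto simp: clique_def simple_graph_def)

lemma clique_finite: "simple_graph V E \<Longrightarrow> clique V E K \<Longrightarrow> finite K"
  by (auto simp: clique_def simple_graph_def intro: finite_subset)

lemma card_clique_le_clique_number:
  "simple_graph V E \<Longrightarrow> clique V E K \<Longrightarrow> card K \<le> clique_number V E"
  unfolding clique_number_def by (simp add: finite_cliques)

text \<open>A maximum clique exists (the empty set is a clique, so the maximum is attained).\<close>
lemma maximum_clique_exists: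
  assumes "simple_graph V E"
  obtains K where "clique V E K" "card K = clique_number V E"
proof -
  have "{} \<in> {K. clique V E K}" by (simp add: clique_def)
  then have "clique_number V E \<in> card ` {K. clique V E K}"
    unfolding clique_number_def using finite_cliques[OF assms] by (intro Max_in) auto
  then obtain K where "K \<in> {K. clique V E K}" "clique_number V E = card K" by (rule imageE)
  then show ?thesis using that by simp
qed

lemma maximum_clique_is_maximal:
  assumes sg: "simple_graph V E" and cl: "clique V E K" and cK: "card K = clique_number V E"
  shows "maximal_clique V E K"
proof -
  have "K' = K" if "clique V E K'" "K \<subseteq> K'" for K'
    using card_seteq[OF clique_finite[OF sg that(1)] that(2)]
      card_clique_le_clique_number[OF sg that(1)] cK by simp
  then show ?thesis using cl by (auto simp: maximal_clique_def)
qed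

lemma clique_extends_to_maximal:
  assumes sg: "simple_graph V E" and cl: "clique V E T"
  obtains M where "maximal_clique V E M" "T \<subseteq> M"
proof -
  have "T \<in> {K. clique V E K}" using cl by simp
  from finite_has_maximal2[OF finite_cliques[OF sg] this]
  obtain M where M: "clique V E M" "T \<subseteq> M" and Mmax: "\<forall>K'\<in>{K. clique V E K}. M \<subseteq> K' \<longrightarrow> M = K'"
    by blast
  then have "maximal_clique V E M" unfolding maximal_clique_def by blast
  then show ?thesis using that M(2) by blast
qed

text \<open>If at most one maximal clique has >= 3 vertices, then every triangle lies in any maximum
  clique: the triangle extends to a maximal clique with >= 3 vertices, which must then be the
  (maximal, and of size >= 3) maximum clique itself.\<close>
lemma triangles_in_maximum_clique:
  assumes sg: "simple_graph V E"
    and unique: "card {K. maximal_clique V E K \<and> card K \<ge> 3} \<le> 1"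
    and cl: "clique V E K" and cK: "card K = clique_number V E"
    and xy: "E x y" and yz: "E y z" and xz: "E x z"
  shows "x \<in> K"
proof -
  define T where "T = {x, y, z}"
  have "x \<noteq> y" "y \<noteq> z" "x \<noteq> z" using xy yz xz simple_graph_irrefl[OF sg] by auto
  then have cT: "card T = 3" by (simp add: T_def)
  have clT: "clique V E T"
    using xy yz xz sg simple_graph_sym[OF sg] by (auto simp: T_def clique_def simple_graph_def)
  obtain M where M: "maximal_clique V E M" "T \<subseteq> M" using clique_extends_to_maximal[OF sg clT] .
  define X where "X = {K. maximal_clique V E K \<and> card K \<ge> 3}"
  have "X \<subseteq> {K. clique V E K}" by (auto simp: X_def maximal_clique_def)
  then have "finite X" using finite_cliques[OF sg] finite_subset by blast
  moreover have "M \<in> X"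
    using M cT card_mono[OF clique_finite[OF sg] M(2)] by (auto simp: X_def maximal_clique_def)
  moreover have "K \<in> X"
    using maximum_clique_is_maximal[OF sg cl cK] card_clique_le_clique_number[OF sg clT] cT cK
    by (simp add: X_def)
  moreover have "card X \<le> Suc 0" using unique by (simp add: X_def)
  ultimately have "M = K" using card_le_Suc0_iff_eq by blast
  then show ?thesis using M(2) by (simp add: T_def)
qed

theorem theorem2:
  fixes V :: "'a set" and E :: "'a \<Rightarrow> 'a \<Rightarrow> bool"
  assumes "simple_graph V E"
    and "connected_graph V E"
    and "holes_edge_disjoint V E"
    and "card {K. maximal_clique V E K \<and> card K \<ge> 3} \<le> 1"
    and "2 \<le> clique_number V E"
    and "clique_number V E \<le> num_holes V E + 1"
  shows "int (competition_number V E) \<le> int (num_holes V E) - int (clique_number V E) + 3"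
proof -
  obtain K where cl: "clique V E K" and cK: "card K = clique_number V E"
    using maximum_clique_exists[OF assms(1)] by blast
  have "K \<noteq> {}" using cK assms(5) by auto
  moreover have "\<forall>x y z. E x y \<longrightarrow> E y z \<longrightarrow> E x z \<longrightarrow> x \<in> K"
    using triangles_in_maximum_clique[OF assms(1,4) cl cK] by blast
  ultimately have "card (outer_edges E K) + card K \<le> card V + num_holes V E"
    using outer_edges_bound[OF assms(1-3) cl] by blast
  then have few: "int (card (outer_edges E K))
      \<le> int (card V) + (int (num_holes V E) - int (clique_number V E) + 2) - 2"
    using cK by linarith
  have "int (num_holes V E) - int (clique_number V E) + 2 \<ge> 1" using assms(6) by linarith
  from competition_number_le_from_outer_edges[OF assms(1) cl this few] show ?thesis by linarith
qed

end
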